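(* Let $\mathfrak{g}$ be a finite-dimensional supersolvable Lie algebra over a field $\mathbb{F}$, and let $M$ be a finite-dimensional irreducible Leibniz $\mathfrak{g}$-bimodule such that $\dim_{\mathbb{F}}M\ne 1$. Then $\mathrm{HL}^n(\mathfrak{g},M)=0$ for every positive integer $n$. Moreover, if $M$ is symmetric, then $\mathrm{HL}^n(\mathfrak{g},M)=0$ for every non-negative integer $n$.
   Context: A Lie algebra $\mathfrak{g}$ is supersolvable if there is a chain of ideals $0=\mathfrak{g}_0\subset\mathfrak{g}_1\subset\cdots\subset\mathfrak{g}_n=\mathfrak{g}$ with $\dim\mathfrak{g}_j/\mathfrak{g}_{j-1}=1$. $\mathfrak{g}$ is regarded as a left Leibniz algebra with $xy=[x,y]$. A Leibniz $\mathfrak{g}$-bimodule is a vector space $M$ with bilinear actions $x\cdot m$, $m\cdot x$ satisfying $(xy)\cdot m=x\cdot(y\cdot m)-y\cdot(x\cdot m)$, $(x\cdot m)\cdot y=x\cdot(m\cdot y)-m\cdot(xy)$, $(m\cdot x)\cdot y=m\cdot(xy)-x\cdot(m\cdot y)$; it is irreducible if nonzero with no sub-bimodules other than $0$ and $M$; symmetric if $m\cdot x=-x\cdot m$. $\mathrm{HL}^n(\mathfrak{g},M)$ is the cohomology of $\mathrm{Hom}(\mathfrak{g}^{\otimes n},M)$ with $(\mathrm{d}^nf)(x_1,\dots,x_{n+1})=\sum_{i=1}^n(-1)^{i+1}x_i\cdot f(\dots,\hat{x}_i,\dots)+(-1)^{n+1}f(x_1,\dots,x_n)\cdot x_{n+1}+\sum_{i<j}(-1)^if(x_1,\dots,\hat{x}_i,\dots,x_ix_j,\dots,x_{n+1})$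 ($x_ix_j$ in the $j$-th position). *)

theory Defs
  imports Main "HOL.Vector_Spaces"
begin

(* Vector spaces over a field 'k are modelled as whole types ('g, 'm) with a
   scalar multiplication satisfying the vector_space locale axioms. *)

definition fin_dim :: "('k::field \<Rightarrow> 'v::ab_group_add \<Rightarrow> 'v) \<Rightarrow> bool" where
  "fin_dim s \<longleftrightarrow> (\<exists>B. finite B \<and> module.span s B = UNIV)"

definition bilinear_map ::
  "('k::field \<Rightarrow> 'a::ab_group_add \<Rightarrow> 'a) \<Rightarrow> ('k \<Rightarrow> 'b::ab_group_add \<Rightarrow> 'b)
   \<Rightarrow> ('k \<Rightarrow> 'c::ab_group_add \<Rightarrow> 'c) \<Rightarrow> ('a \<Rightarrow> 'b \<Rightarrow> 'c) \<Rightarrow> bool" where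
  "bilinear_map sa sb sc h \<longleftrightarrow>
     (\<forall>y. Vector_Spaces.linear sa sc (\<lambda>x. h x y)) \<and> (\<forall>x. Vector_Spaces.linear sb sc (\<lambda>y. h x y))"

definition lie_algebra :: "('k::field \<Rightarrow> 'g::ab_group_add \<Rightarrow> 'g) \<Rightarrow> ('g \<Rightarrow> 'g \<Rightarrow> 'g) \<Rightarrow> bool" where
  "lie_algebra s br \<longleftrightarrow> vector_space s \<and> bilinear_map s s s br \<and>
     (\<forall>x. br x x = 0) \<and>
     (\<forall>x y z. br x (br y z) + br y (br z x) + br z (br x y) = 0)"

definition lie_ideal :: "('k::field \<Rightarrow> 'g::ab_group_add \<Rightarrow> 'g) \<Rightarrow> ('g \<Rightarrow> 'g \<Rightarrow> 'g) \<Rightarrow> 'g set \<Rightarrow> bool" where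
  "lie_ideal s br I \<longleftrightarrow> module.subspace s I \<and> (\<forall>x y. y \<in> I \<longrightarrow> br x y \<in> I)"

(* supersolvable: chain of ideals 0 = g_0 \<subseteq> ... \<subseteq> g_n = g with dim g_j / g_{j-1} = 1,
   i.e. (finite dimension) dim g_j = dim g_{j-1} + 1 *)
definition supersolvable :: "('k::field \<Rightarrow> 'g::ab_group_add \<Rightarrow> 'g) \<Rightarrow> ('g \<Rightarrow> 'g \<Rightarrow> 'g) \<Rightarrow> bool" where
  "supersolvable s br \<longleftrightarrow> (\<exists>(n::nat) (c::nat \<Rightarrow> 'g set).
      c 0 = {0} \<and> c n = UNIV \<and> (\<forall>j\<le>n. lie_ideal s br (c j)) \<and>
      (\<forall>j<n. c j \<subseteq> c (Suc j) \<and> vector_space.dim s (c (Suc j)) = vector_space.dim s (c j) + 1))"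

definition leibniz_bimodule ::
  "('k::field \<Rightarrow> 'g::ab_group_add \<Rightarrow> 'g) \<Rightarrow> ('g \<Rightarrow> 'g \<Rightarrow> 'g) \<Rightarrow>
   ('k \<Rightarrow> 'm::ab_group_add \<Rightarrow> 'm) \<Rightarrow> ('g \<Rightarrow> 'm \<Rightarrow> 'm) \<Rightarrow> ('m \<Rightarrow> 'g \<Rightarrow> 'm) \<Rightarrow> bool" where
  "leibniz_bimodule sg br sm la ra \<longleftrightarrow> vector_space sm \<and>
     bilinear_map sg sm sm la \<and> bilinear_map sm sg sm ra \<and>
     (\<forall>x y m. la (br x y) m = la x (la y m) - la y (la x m)) \<and>
     (\<forall>x y m. ra (la x m) y = la x (ra m y) - ra m (br x y)) \<and>
     (\<forall>x y m. ra (ra m x) y = ra m (br x y) - la x (ra m y))"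

definition sub_bimodule ::
  "('k::field \<Rightarrow> 'm::ab_group_add \<Rightarrow> 'm) \<Rightarrow> ('g \<Rightarrow> 'm \<Rightarrow> 'm) \<Rightarrow> ('m \<Rightarrow> 'g \<Rightarrow> 'm) \<Rightarrow> 'm set \<Rightarrow> bool" where
  "sub_bimodule sm la ra N \<longleftrightarrow> module.subspace sm N \<and>
     (\<forall>x m. m \<in> N \<longrightarrow> la x m \<in> N \<and> ra m x \<in> N)"

definition irreducible_bimodule ::
  "('k::field \<Rightarrow> 'm::ab_group_add \<Rightarrow> 'm) \<Rightarrow> ('g \<Rightarrow> 'm \<Rightarrow> 'm) \<Rightarrow> ('m \<Rightarrow> 'g \<Rightarrow> 'm) \<Rightarrow> bool" where
  "irreducible_bimodule sm la ra \<longleftrightarrow> (UNIV :: 'm set) \<noteq> {0} \<and>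
     (\<forall>N. sub_bimodule sm la ra N \<longrightarrow> N = {0} \<or> N = UNIV)"

definition symmetric_bimodule :: "('g \<Rightarrow> 'm::ab_group_add \<Rightarrow> 'm) \<Rightarrow> ('m \<Rightarrow> 'g \<Rightarrow> 'm) \<Rightarrow> bool" where
  "symmetric_bimodule la ra \<longleftrightarrow> (\<forall>x m. ra m x = - la x m)"

(* n-cochains: Hom(g^{\<otimes>n}, M) identified with n-multilinear maps g^n \<rightarrow> M,
   represented as functions on lists, required to vanish on lists of length \<noteq> n *)
definition cochain ::
  "('k::field \<Rightarrow> 'g::ab_group_add \<Rightarrow> 'g) \<Rightarrow> ('k \<Rightarrow> 'm::ab_group_add \<Rightarrow> 'm) \<Rightarrow> nat \<Rightarrow> ('g list \<Rightarrow> 'm) \<Rightarrow> bool" where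
  "cochain sg sm n f \<longleftrightarrow>
     (\<forall>xs. length xs \<noteq> n \<longrightarrow> f xs = 0) \<and>
     (\<forall>xs k. length xs = n \<longrightarrow> k < n \<longrightarrow> Vector_Spaces.linear sg sm (\<lambda>y. f (xs[k := y])))"

definition omit :: "nat \<Rightarrow> 'a list \<Rightarrow> 'a list" where
  "omit k xs = take k xs @ drop (Suc k) xs"

(* Leibniz coboundary d^n, with 0-based list indices: position k corresponds to x_{k+1} *)
definition leibniz_d ::
  "('k::field \<Rightarrow> 'm::ab_group_add \<Rightarrow> 'm) \<Rightarrow> ('g \<Rightarrow> 'g \<Rightarrow> 'g) \<Rightarrow>
   ('g \<Rightarrow> 'm \<Rightarrow> 'm) \<Rightarrow> ('m \<Rightarrow> 'g \<Rightarrow> 'm) \<Rightarrow> nat \<Rightarrow> ('g list \<Rightarrow> 'm) \<Rightarrow> 'g list \<Rightarrow> 'm" where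
  "leibniz_d sm br la ra n f xs =
     (if length xs = Suc n then
        (\<Sum>k<n. sm ((-1) ^ (k + 2)) (la (xs ! k) (f (omit k xs))))
        + sm ((-1) ^ (n + 1)) (ra (f (take n xs)) (xs ! n))
        + (\<Sum>l\<le>n. \<Sum>k<l. sm ((-1) ^ (k + 1)) (f (omit k (xs[l := br (xs ! k) (xs ! l)]))))
      else 0)"

definition HL_vanishes ::
  "('k::field \<Rightarrow> 'g::ab_group_add \<Rightarrow> 'g) \<Rightarrow> ('g \<Rightarrow> 'g \<Rightarrow> 'g) \<Rightarrow>
   ('k \<Rightarrow> 'm::ab_group_add \<Rightarrow> 'm) \<Rightarrow> ('g \<Rightarrow> 'm \<Rightarrow> 'm) \<Rightarrow> ('m \<Rightarrow> 'g \<Rightarrow> 'm) \<Rightarrow> nat \<Rightarrow> bool" where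
  "HL_vanishes sg br sm la ra n \<longleftrightarrow>
     (\<forall>f. cochain sg sm n f \<and> leibniz_d sm br la ra n f = (\<lambda>_. 0) \<longrightarrow>
        (if n = 0 then f = (\<lambda>_. 0)
         else (\<exists>h. cochain sg sm (n - 1) h \<and> leibniz_d sm br la ra (n - 1) h = f)))"

end

theory Submission
  imports Defs
begin

(* Choose a flag of ideals 0 = c 0 < ... < c N = g with c (j + 1) = F e_j + c j; then g acts on
   the line c (j + 1) / c j by a character.  The products c (T_1 + 1) x ... x c (T_n + 1), indexed
   by multi-indices T, cover g^n, and an n-cocycle f (n > 0) is killed by coboundaries one box at
   a time, the boxes being taken in an order compatible with the componentwise order of indices.
   Once f vanishes on the lower boxes, its restriction to box T is determined by u = f (e_T), and
   Cartan's formula i_x d + d i_x = theta_x (contract and lie_deriv below) turns the cocycle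
   condition into x.u - lambda_T(x) u \<in> V, where V collects the values at e_T of the coboundaries
   d h that vanish on the lower boxes.  V is stable under the left action, and the right action of
   an irreducible Leibniz bimodule is either 0 or minus the left action, so V = 0 or V = M.  If
   V = 0, then u spans a sub-bimodule of dimension at most one, so u = 0 since dim M \<noteq> 1; in
   either case u \<in> V, and subtracting the corresponding coboundary kills f on box T.  In degree 0
   and for symmetric M, a cocycle is a vector annihilated by g, which vanishes by the same
   argument. *)

definition down_closed :: "nat list set \<Rightarrow> bool" where
  "down_closed P \<longleftrightarrow> (\<forall>T\<in>P. \<forall>S. list_all2 (\<le>) S T \<longrightarrow> S \<in> P)"

lemma sum_list_strict_mono_pointwise:
  fixes xs ys :: "nat list"
  assumes "list_all2 (\<le>) xs ys" and "xs \<noteq> ys"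
  shows "sum_list xs < sum_list ys"
  using assms
proof (induction rule: list_all2_induct)
  case (Cons x xs y ys)
  show ?case
  proof (cases "xs = ys")
    case True
    then show ?thesis using Cons by auto
  next
    case False
    then show ?thesis using Cons by (simp add: add_le_less_mono)
  qed
qed simp

lemma down_closed_Diff_sum_list_max:
  assumes "down_closed P" and "T \<in> P" and "\<forall>S\<in>P. sum_list S \<le> sum_list T"
  shows "down_closed (P - {T})"
  unfolding down_closed_def
proof (intro ballI allI impI)
  fix S' S assume S': "S' \<in> P - {T}" and le: "list_all2 (\<le>) S S'"
  have "S \<in> P" using assms(1) S' le by (auto simp: down_closed_def)
  moreover have "S \<noteq> T"
  proof
    assume "S = T"
    then have "sum_list T < sum_list S'"
      using le S' by (auto intro: sum_list_strict_mono_pointwise)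
    then show False using assms(3) S' by fastforce
  qed
  ultimately show "S \<in> P - {T}" by simp
qed

lemma sum_split_off:
  assumes "finite A" and "a \<in> A"
  shows "sum f A = f a + (\<Sum>x\<in>A. if x = a then 0 else f x)"
  using assms by (simp add: sum.If_cases sum.remove Diff_eq)

lemma finite_down_closed_remove:
  assumes "finite P" and "P \<noteq> {}" and "down_closed P"
  obtains T where "T \<in> P" and "down_closed (P - {T})"
proof -
  have "Max (sum_list ` P) \<in> sum_list ` P"
    using assms(1,2) by (intro Max_in) auto
  then obtain T where "T \<in> P" and "sum_list T = Max (sum_list ` P)"
    by (auto simp del: Max_in)
  then have "\<forall>S\<in>P. sum_list S \<le> sum_list T"
    using assms(1) by simp
  with assms(3) \<open>T \<in> P\<close> show thesis
    by (intro that[OF \<open>T \<in> P\<close>] down_closed_Diff_sum_list_max)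
qed

context finite_dimensional_vector_space
begin

lemma subspace_eq_line_plus_hyperplane:
  assumes U: "subspace U" and V: "subspace V" and "U \<subseteq> V"
    and dim: "dim V = dim U + 1" and "u \<in> V" and "u \<notin> U"
  shows "V = {a *s u + w | a w. w \<in> U}"
proof
  have span_U: "span U = U"
    using U by simp
  have "u \<notin> span U"
    using \<open>u \<notin> U\<close> span_U by blast
  then have "dim (insert u U) = dim V"
    using dim by (simp add: dim_insert)
  then have span_uU: "span (insert u U) = V"
    using dim_eq_span[of "insert u U" V] \<open>u \<in> V\<close> \<open>U \<subseteq> V\<close> V by simp
  show "V \<subseteq> {a *s u + w | a w. w \<in> U}"
  proof
    fix v assume "v \<in> V"
    then obtain a where "v - a *s u \<in> U"
      using span_uU span_U span_breakdown_eq by blast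
    then show "v \<in> {a *s u + w | a w. w \<in> U}"
      by (intro CollectI exI[of _ a] exI[of _ "v - a *s u"]) simp
  qed
  show "{a *s u + w | a w. w \<in> U} \<subseteq> V"
    using \<open>u \<in> V\<close> \<open>U \<subseteq> V\<close> V by (auto intro: subspace_add subspace_scale)
qed

end

lemma fin_dim_imp_finite_dimensional_vector_space:
  assumes "vector_space s" and "fin_dim s"
  obtains B where "finite_dimensional_vector_space s B"
proof -
  interpret vector_space s by fact
  obtain B0 where "finite B0" "span B0 = UNIV"
    using assms(2) by (auto simp: fin_dim_def)
  moreover obtain B where "B \<subseteq> B0" "independent B" "B0 \<subseteq> span B"
    using maximal_independent_subset[of B0] by blast
  moreover have "span B = UNIV"
    using span_mono[OF \<open>B0 \<subseteq> span B\<close>] \<open>span B0 = UNIV\<close> by (auto simp: span_span)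
  ultimately have "finite_dimensional_vector_space s B"
    by unfold_locales (auto intro: finite_subset)
  then show thesis by (rule that)
qed

section \<open>The Leibniz cochain complex\<close>

locale lie_leibniz_bimodule =
  fixes sg :: "'k::field \<Rightarrow> 'g::ab_group_add \<Rightarrow> 'g" and br :: "'g \<Rightarrow> 'g \<Rightarrow> 'g"
    and sm :: "'k \<Rightarrow> 'm::ab_group_add \<Rightarrow> 'm" and la :: "'g \<Rightarrow> 'm \<Rightarrow> 'm" and ra :: "'m \<Rightarrow> 'g \<Rightarrow> 'm"
  assumes lie: "lie_algebra sg br"
    and bimodule: "leibniz_bimodule sg br sm la ra"
begin

sublocale G: vector_space sg
  using lie by (simp add: lie_algebra_def)

sublocale M: vector_space sm
  using bimodule by (simp add: leibniz_bimodule_def)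

lemma br_hom_left: "module_hom sg sg (\<lambda>x. br x y)"
  and br_hom_right: "module_hom sg sg (br x)"
  using lie by (auto simp: lie_algebra_def bilinear_map_def linear_iff_module_hom)

lemma la_hom_left: "module_hom sg sm (\<lambda>x. la x v)"
  and la_hom_right: "module_hom sm sm (la x)"
  using bimodule by (auto simp: leibniz_bimodule_def bilinear_map_def linear_iff_module_hom)

lemma ra_hom_left: "module_hom sm sm (\<lambda>v. ra v x)"
  and ra_hom_right: "module_hom sg sm (ra v)"
  using bimodule by (auto simp: leibniz_bimodule_def bilinear_map_def linear_iff_module_hom)

lemmas br_add_left = module_hom.add[OF br_hom_left]
  and br_scale_left = module_hom.scale[OF br_hom_left]
  and br_add_right = module_hom.add[OF br_hom_right]
  and br_scale_right = module_hom.scale[OF br_hom_right]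
  and la_add_left = module_hom.add[OF la_hom_left]
  and la_scale_left = module_hom.scale[OF la_hom_left]
  and la_add_right = module_hom.add[OF la_hom_right]
  and la_zero_right = module_hom.zero[OF la_hom_right]
  and la_scale_right = module_hom.scale[OF la_hom_right]
  and la_neg_right = module_hom.neg[OF la_hom_right]
  and la_diff_right = module_hom.diff[OF la_hom_right]
  and la_sum_right = module_hom.sum[OF la_hom_right]
  and ra_add_left = module_hom.add[OF ra_hom_left]
  and ra_scale_left = module_hom.scale[OF ra_hom_left]
  and ra_neg_left = module_hom.neg[OF ra_hom_left]
  and ra_zero_left = module_hom.zero[OF ra_hom_left]
  and ra_add_right = module_hom.add[OF ra_hom_right]
  and ra_scale_right = module_hom.scale[OF ra_hom_right]

lemma br_self: "br x x = 0"
  and jacobi: "br x (br y z) + br y (br z x) + br z (br x y) = 0"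
  using lie by (simp_all add: lie_algebra_def)

lemma la_br: "la (br x y) v = la x (la y v) - la y (la x v)"
  and ra_la: "ra (la x v) y = la x (ra v y) - ra v (br x y)"
  and ra_ra: "ra (ra v x) y = ra v (br x y) - la x (ra v y)"
  using bimodule by (simp_all add: leibniz_bimodule_def)

lemma br_antisym: "br x y = - br y x"
proof -
  have "0 = br (x + y) (x + y)"
    by (simp add: br_self)
  also have "\<dots> = br x y + br y x"
    unfolding br_add_left br_add_right by (simp add: br_self)
  finally show ?thesis
    by (metis eq_neg_iff_add_eq_0)
qed

lemma br_br: "br (br x y) z = br x (br y z) - br y (br x z)"
  using jacobi[of x y z] br_antisym[of z "br x y"] br_antisym[of z x]
    module_hom.neg[OF br_hom_right, of y "br x z"]
  by (simp add: algebra_simps)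

lemma cochain_eq_0: "cochain sg sm n f \<Longrightarrow> length xs \<noteq> n \<Longrightarrow> f xs = 0"
  by (simp add: cochain_def)

lemma cochain_hom:
  "cochain sg sm n f \<Longrightarrow> length xs = n \<Longrightarrow> k < n \<Longrightarrow> module_hom sg sm (\<lambda>y. f (xs[k := y]))"
  by (simp add: cochain_def linear_iff_module_hom)

lemma cochainI:
  assumes "\<And>xs. length xs \<noteq> n \<Longrightarrow> f xs = 0"
    and "\<And>xs k y z. length xs = n \<Longrightarrow> k < n \<Longrightarrow> f (xs[k := y + z]) = f (xs[k := y]) + f (xs[k := z])"
    and "\<And>xs k a y. length xs = n \<Longrightarrow> k < n \<Longrightarrow> f (xs[k := sg a y]) = sm a (f (xs[k := y]))"
  shows "cochain sg sm n f"
  using assms G.vector_space_axioms M.vector_space_axioms by (simp add: cochain_def linear_iff)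

lemma cochain_update_add:
  "cochain sg sm n f \<Longrightarrow> k < length xs \<Longrightarrow> f (xs[k := y + z]) = f (xs[k := y]) + f (xs[k := z])"
  by (cases "length xs = n") (simp_all add: module_hom.add[OF cochain_hom] cochain_eq_0)

lemma cochain_update_scale:
  "cochain sg sm n f \<Longrightarrow> k < length xs \<Longrightarrow> f (xs[k := sg a y]) = sm a (f (xs[k := y]))"
  by (cases "length xs = n") (simp_all add: module_hom.scale[OF cochain_hom] cochain_eq_0)

lemma cochain_update_diff:
  "cochain sg sm n f \<Longrightarrow> k < length xs \<Longrightarrow> f (xs[k := y - z]) = f (xs[k := y]) - f (xs[k := z])"
  by (cases "length xs = n") (simp_all add: module_hom.diff[OF cochain_hom] cochain_eq_0)

lemma cochain_update_0: "cochain sg sm n f \<Longrightarrow> k < length xs \<Longrightarrow> f (xs[k := 0]) = 0"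
  by (cases "length xs = n") (simp_all add: module_hom.zero[OF cochain_hom] cochain_eq_0)

lemma cochain_add: "cochain sg sm n f \<Longrightarrow> cochain sg sm n g \<Longrightarrow> cochain sg sm n (\<lambda>xs. f xs + g xs)"
  by (rule cochainI) (simp_all add: cochain_eq_0 cochain_update_add cochain_update_scale M.scale_right_distrib)

lemma cochain_scale: "cochain sg sm n f \<Longrightarrow> cochain sg sm n (\<lambda>xs. sm a (f xs))"
  by (rule cochainI) (simp_all add: cochain_eq_0 cochain_update_add cochain_update_scale
      M.scale_right_distrib M.scale_left_commute[of a])

lemma cochain_diff: "cochain sg sm n f \<Longrightarrow> cochain sg sm n g \<Longrightarrow> cochain sg sm n (\<lambda>xs. f xs - g xs)"
  by (rule cochainI) (simp_all add: cochain_eq_0 cochain_update_add cochain_update_scale M.scale_right_diff_distrib)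

lemma cochain_zero: "cochain sg sm n (\<lambda>xs. 0)"
  by (rule cochainI) simp_all

lemma omit_0_Cons [simp]: "omit 0 (x # xs) = xs"
  by (simp add: omit_def)

lemma omit_Suc_Cons [simp]: "omit (Suc k) (x # xs) = x # omit k xs"
  by (simp add: omit_def)

lemma length_omit [simp]: "length (omit k xs) = (if k < length xs then length xs - 1 else length xs)"
  by (simp add: omit_def)

abbreviation d :: "nat \<Rightarrow> ('g list \<Rightarrow> 'm) \<Rightarrow> 'g list \<Rightarrow> 'm" where
  "d \<equiv> leibniz_d sm br la ra"

lemma d_cong:
  assumes "\<And>zs. length zs = m \<Longrightarrow> f zs = g zs"
  shows "d m f xs = d m g xs"
  using assms by (simp add: leibniz_d_def)

lemma d_add: "d m (\<lambda>zs. f zs + g zs) xs = d m f xs + d m g xs"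
proof (cases "length xs = Suc m")
  case True
  show ?thesis
    unfolding leibniz_d_def
    by (simp only: if_P[OF True] la_add_right ra_add_left M.scale_right_distrib sum.distrib) (simp add: algebra_simps)
qed (simp add: leibniz_d_def)

lemma d_scale: "d m (\<lambda>zs. sm a (f zs)) xs = sm a (d m f xs)"
proof (cases "length xs = Suc m")
  case True
  show ?thesis
    unfolding leibniz_d_def
    by (simp only: if_P[OF True] la_scale_right ra_scale_left M.scale_right_distrib M.scale_sum_right
        M.scale_left_commute[of a])
qed (simp add: leibniz_d_def)

lemma d_diff: "d m (\<lambda>zs. f zs - g zs) xs = d m f xs - d m g xs"
  using d_add[of m f "\<lambda>zs. - g zs" xs] d_scale[of m "-1" g xs] by simp

lemma d_zero: "d m (\<lambda>zs. 0) xs = 0"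
  by (simp add: leibniz_d_def la_zero_right ra_zero_left)

lemma d_0_singleton: "d 0 f [y] = - ra (f []) y"
  by (simp add: leibniz_d_def)

definition lie_deriv :: "'g \<Rightarrow> ('g list \<Rightarrow> 'm) \<Rightarrow> 'g list \<Rightarrow> 'm" where
  "lie_deriv x f xs = la x (f xs) - (\<Sum>l<length xs. f (xs[l := br x (xs ! l)]))"

definition contract :: "'g \<Rightarrow> ('g list \<Rightarrow> 'm) \<Rightarrow> 'g list \<Rightarrow> 'm" where
  "contract x f xs = f (x # xs)"

lemma cartan_formula:
  assumes len: "length xs = Suc m"
  shows "d (Suc m) f (x # xs) = lie_deriv x f xs - d m (contract x f) xs"
proof -
  have left_actions: "(\<Sum>k<Suc m. sm ((-1) ^ (k + 2)) (la ((x # xs) ! k) (f (omit k (x # xs))))) =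
      la x (f xs) - (\<Sum>k<m. sm ((-1) ^ (k + 2)) (la (xs ! k) (contract x f (omit k xs))))"
    by (simp add: contract_def sum.lessThan_Suc_shift sum_negf del: sum.lessThan_Suc)
  have right_action: "sm ((-1) ^ (Suc m + 1)) (ra (f (take (Suc m) (x # xs))) ((x # xs) ! Suc m)) =
      - sm ((-1) ^ (m + 1)) (ra (contract x f (take m xs)) (xs ! m))"
    by (simp add: contract_def)
  have brackets: "(\<Sum>l\<le>Suc m. \<Sum>k<l. sm ((-1) ^ (k + 1))
        (f (omit k ((x # xs)[l := br ((x # xs) ! k) ((x # xs) ! l)])))) =
      - (\<Sum>l\<le>m. f (xs[l := br x (xs ! l)]))
      - (\<Sum>l\<le>m. \<Sum>k<l. sm ((-1) ^ (k + 1)) (contract x f (omit k (xs[l := br (xs ! k) (xs ! l)]))))"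
    by (simp add: contract_def sum.atMost_Suc_shift sum.lessThan_Suc_shift sum_subtractf sum_negf
        del: sum.lessThan_Suc sum.atMost_Suc)
  show ?thesis
    using len unfolding leibniz_d_def lie_deriv_def
    by (simp only: left_actions right_action brackets if_True length_Cons)
      (simp add: lessThan_Suc_atMost algebra_simps)
qed

lemma d_contract_cocycle:
  assumes "\<And>xs. d (Suc m) f xs = 0" and "length xs = Suc m"
  shows "d m (contract x f) xs = lie_deriv x f xs"
  using cartan_formula[OF assms(2), of f x] assms(1)[of "x # xs"] by simp

lemma lie_deriv_cong:
  assumes "\<And>zs. length zs = length xs \<Longrightarrow> f zs = g zs"
  shows "lie_deriv x f xs = lie_deriv x g xs"
  using assms by (simp add: lie_deriv_def)

lemma lie_deriv_diff: "lie_deriv x (\<lambda>zs. f zs - g zs) xs = lie_deriv x f xs - lie_deriv x g xs"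
  by (simp add: lie_deriv_def la_diff_right sum_subtractf algebra_simps)

lemma lie_deriv_Cons:
  "lie_deriv x f (y # zs) = lie_deriv x (contract y f) zs - contract (br x y) f zs"
  by (simp add: contract_def lie_deriv_def sum.lessThan_Suc_shift del: sum.lessThan_Suc)

lemma contract_lie_deriv:
  "contract y (lie_deriv x f) = (\<lambda>zs. lie_deriv x (contract y f) zs - contract (br x y) f zs)"
  by (simp add: fun_eq_iff contract_def lie_deriv_Cons)

lemma lie_deriv_add_left:
  "cochain sg sm n f \<Longrightarrow> lie_deriv (x + y) f xs = lie_deriv x f xs + lie_deriv y f xs"
  by (simp add: lie_deriv_def br_add_left la_add_left cochain_update_add sum.distrib algebra_simps)

lemma lie_deriv_scale_left:
  "cochain sg sm n f \<Longrightarrow> lie_deriv (sg a x) f xs = sm a (lie_deriv x f xs)"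
  by (simp add: lie_deriv_def br_scale_left la_scale_left cochain_update_scale M.scale_sum_right
      M.scale_right_diff_distrib)

lemma contract_add_left:
  "cochain sg sm (Suc m) f \<Longrightarrow> contract (y + z) f = (\<lambda>zs. contract y f zs + contract z f zs)"
  using cochain_update_add[of "Suc m" f 0 "y # _"] by (simp add: fun_eq_iff contract_def)

lemma contract_scale_left:
  "cochain sg sm (Suc m) f \<Longrightarrow> contract (sg a y) f = (\<lambda>zs. sm a (contract y f zs))"
  using cochain_update_scale[of "Suc m" f 0 "y # _"] by (simp add: fun_eq_iff contract_def)

lemma cochain_contract:
  assumes f: "cochain sg sm (Suc m) f"
  shows "cochain sg sm m (contract x f)"
proof (rule cochainI)
  show "contract x f xs = 0" if "length xs \<noteq> m" for xs
    using that by (simp add: contract_def cochain_eq_0[OF f])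
  show "contract x f (xs[k := y + z]) = contract x f (xs[k := y]) + contract x f (xs[k := z])"
    if "length xs = m" "k < m" for xs k y z
    using that cochain_update_add[OF f, of "Suc k" "x # xs"] by (simp add: contract_def)
  show "contract x f (xs[k := sg a y]) = sm a (contract x f (xs[k := y]))"
    if "length xs = m" "k < m" for xs k a y
    using that cochain_update_scale[OF f, of "Suc k" "x # xs"] by (simp add: contract_def)
qed

lemma cochain_update_br:
  assumes f: "cochain sg sm m f" and "k < length xs" "l < length xs"
  shows "f ((xs[k := y + z])[l := br x (xs[k := y + z] ! l)]) =
      f ((xs[k := y])[l := br x (xs[k := y] ! l)]) + f ((xs[k := z])[l := br x (xs[k := z] ! l)])"
    and "f ((xs[k := sg a y])[l := br x (xs[k := sg a y] ! l)]) =
      sm a (f ((xs[k := y])[l := br x (xs[k := y] ! l)]))"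
proof -
  have swap: "(xs[k := v])[l := br x (xs[k := v] ! l)] =
      (if l = k then xs[k := br x v] else (xs[l := br x (xs ! l)])[k := v])" for v
    using assms(2,3) by (auto simp: list_update_swap)
  show "f ((xs[k := y + z])[l := br x (xs[k := y + z] ! l)]) =
      f ((xs[k := y])[l := br x (xs[k := y] ! l)]) + f ((xs[k := z])[l := br x (xs[k := z] ! l)])"
    using assms(2) by (simp add: swap cochain_update_add[OF f] br_add_right)
  show "f ((xs[k := sg a y])[l := br x (xs[k := sg a y] ! l)]) =
      sm a (f ((xs[k := y])[l := br x (xs[k := y] ! l)]))"
    using assms(2) by (simp add: swap cochain_update_scale[OF f] br_scale_right)
qed

lemma cochain_lie_deriv:
  assumes f: "cochain sg sm m f"
  shows "cochain sg sm m (lie_deriv x f)"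
proof (rule cochainI)
  show "lie_deriv x f xs = 0" if "length xs \<noteq> m" for xs
    using that by (simp add: lie_deriv_def cochain_eq_0[OF f] la_zero_right)
  show "lie_deriv x f (xs[k := y + z]) = lie_deriv x f (xs[k := y]) + lie_deriv x f (xs[k := z])"
    if "length xs = m" "k < m" for xs k y z
    using that by (simp add: lie_deriv_def cochain_update_br(1)[OF f] cochain_update_add[OF f]
        la_add_right sum.distrib algebra_simps)
  show "lie_deriv x f (xs[k := sg a y]) = sm a (lie_deriv x f (xs[k := y]))"
    if "length xs = m" "k < m" for xs k a y
    using that by (simp add: lie_deriv_def cochain_update_br(2)[OF f] cochain_update_scale[OF f]
        la_scale_right M.scale_sum_right M.scale_right_diff_distrib)
qed

text \<open>The double sums split into diagonal terms, which combine by the Jacobi identity, and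
  off-diagonal terms, which are symmetric in \<open>x\<close> and \<open>y\<close>.\<close>

lemma lie_deriv_bracket:
  assumes f: "cochain sg sm n f" and len: "length xs = n"
  shows "lie_deriv x (lie_deriv y f) xs - lie_deriv y (lie_deriv x f) xs = lie_deriv (br x y) f xs"
proof -
  have split: "(\<Sum>l<n. \<Sum>p<n. f ((xs[l := br u (xs ! l)])[p := br v (xs[l := br u (xs ! l)] ! p)]))
     = (\<Sum>l<n. f (xs[l := br v (br u (xs ! l))])) +
       (\<Sum>l<n. \<Sum>p<n. if p = l then 0 else f ((xs[l := br u (xs ! l)])[p := br v (xs ! p)]))" for u v
  proof -
    have "(\<Sum>p<n. f ((xs[l := br u (xs ! l)])[p := br v (xs[l := br u (xs ! l)] ! p)]))
      = f (xs[l := br v (br u (xs ! l))]) +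
        (\<Sum>p<n. if p = l then 0 else f ((xs[l := br u (xs ! l)])[p := br v (xs ! p)]))"
      if "l < n" for l
      using that len by (subst sum_split_off[of _ l]) (auto intro!: sum.cong)
    then show ?thesis by (simp add: sum.distrib)
  qed
  have off_diagonal_symmetric:
    "(\<Sum>l<n. \<Sum>p<n. if p = l then 0 else f ((xs[l := br x (xs ! l)])[p := br y (xs ! p)])) =
     (\<Sum>l<n. \<Sum>p<n. if p = l then 0 else f ((xs[l := br y (xs ! l)])[p := br x (xs ! p)]))"
    by (subst sum.swap) (auto intro!: sum.cong simp: list_update_swap)
  have diagonal: "(\<Sum>l<n. f (xs[l := br y (br x (xs ! l))])) - (\<Sum>l<n. f (xs[l := br x (br y (xs ! l))]))
      = - (\<Sum>l<n. f (xs[l := br (br x y) (xs ! l)]))"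
    using len by (simp add: br_br cochain_update_diff[OF f] sum_subtractf[symmetric] sum_negf[symmetric])
  show ?thesis
    unfolding lie_deriv_def using len
    by (simp add: la_diff_right la_sum_right sum_subtractf la_br split)
      (use off_diagonal_symmetric diagonal in \<open>simp add: algebra_simps\<close>)
qed

lemma cochain_d: "cochain sg sm m f \<Longrightarrow> cochain sg sm (Suc m) (d m f)"
proof (induction m arbitrary: f)
  case 0
  show ?case
  proof (rule cochainI)
    show "d 0 f xs = 0" if "length xs \<noteq> Suc 0" for xs
      using that by (simp add: leibniz_d_def)
    show "d 0 f (xs[k := y + z]) = d 0 f (xs[k := y]) + d 0 f (xs[k := z])"
      and "d 0 f (xs[k := sg a y]) = sm a (d 0 f (xs[k := y]))"
      if "length xs = Suc 0" "k < Suc 0" for xs k y z a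
      using that by (auto simp: length_Suc_conv d_0_singleton ra_add_right ra_scale_right)
  qed
next
  case (Suc m)
  note f = Suc.prems
  have IH: "cochain sg sm (Suc m) (d m (contract x f))" for x
    using Suc.IH[OF cochain_contract[OF f]] .
  show ?case
  proof (rule cochainI)
    show "d (Suc m) f xs = 0" if "length xs \<noteq> Suc (Suc m)" for xs
      using that by (simp add: leibniz_d_def)
  next
    fix xs :: "'g list" and k y z a
    assume "length xs = Suc (Suc m)" and k: "k < Suc (Suc m)"
    then obtain x ys where xs: "xs = x # ys" and ys: "length ys = Suc m"
      by (cases xs) auto
    show "d (Suc m) f (xs[k := y + z]) = d (Suc m) f (xs[k := y]) + d (Suc m) f (xs[k := z])"
      using k ys
      by (cases k) (simp_all add: xs cartan_formula lie_deriv_add_left[OF f] contract_add_left[OF f] d_add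
          cochain_update_add[OF cochain_lie_deriv[OF f]] cochain_update_add[OF IH])
    show "d (Suc m) f (xs[k := sg a y]) = sm a (d (Suc m) f (xs[k := y]))"
      using k ys
      by (cases k) (simp_all add: xs cartan_formula lie_deriv_scale_left[OF f] contract_scale_left[OF f] d_scale
          cochain_update_scale[OF cochain_lie_deriv[OF f]] cochain_update_scale[OF IH]
          M.scale_right_diff_distrib)
  qed
qed

lemma lie_deriv_d:
  "cochain sg sm m f \<Longrightarrow> length xs = Suc m \<Longrightarrow> lie_deriv x (d m f) xs = d m (lie_deriv x f) xs"
proof (induction m arbitrary: f x xs)
  case 0
  then obtain y where "xs = [y]"
    by (auto simp: length_Suc_conv)
  then show ?case
    by (simp add: lie_deriv_def d_0_singleton ra_la la_neg_right ra_neg_left)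
next
  case (Suc m)
  note f = Suc.prems(1)
  obtain y ys where xs: "xs = y # ys" and ys: "length ys = Suc m"
    using Suc.prems(2) by (cases xs) auto
  have bracket: "lie_deriv x (lie_deriv y f) ys - lie_deriv (br x y) f ys = lie_deriv y (lie_deriv x f) ys"
    using lie_deriv_bracket[OF f ys, of x y] by (simp add: algebra_simps)
  have "lie_deriv x (contract y (d (Suc m) f)) ys =
      lie_deriv x (\<lambda>zs. lie_deriv y f zs - d m (contract y f) zs) ys"
    by (rule lie_deriv_cong) (simp add: contract_def cartan_formula ys)
  also have "\<dots> = lie_deriv x (lie_deriv y f) ys - d m (lie_deriv x (contract y f)) ys"
    by (simp add: lie_deriv_diff Suc.IH[OF cochain_contract[OF f] ys])
  finally have "lie_deriv x (d (Suc m) f) (y # ys) =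
      (lie_deriv x (lie_deriv y f) ys - lie_deriv (br x y) f ys)
      - d m (lie_deriv x (contract y f)) ys + d m (contract (br x y) f) ys"
    by (simp add: lie_deriv_Cons contract_def cartan_formula ys algebra_simps)
  then show ?case
    unfolding bracket xs by (simp add: cartan_formula ys contract_lie_deriv d_diff algebra_simps)
qed

lemma d_d: "cochain sg sm m f \<Longrightarrow> d (Suc m) (d m f) xs = 0"
proof (induction m arbitrary: f xs)
  case 0
  show ?case
  proof (cases "length xs = 2")
    case True
    then obtain x y where xs: "xs = [x, y]"
      by (auto simp: length_Suc_conv numeral_2_eq_2)
    have "d (Suc 0) (d 0 f) [x, y] = lie_deriv x (d 0 f) [y] - d 0 (contract x (d 0 f)) [y]"
      by (rule cartan_formula) simp
    then show ?thesis
      by (simp add: xs lie_deriv_def d_0_singleton contract_def ra_ra la_neg_right ra_neg_left)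
  qed (simp add: leibniz_d_def)
next
  case (Suc m)
  note f = Suc.prems
  show ?case
  proof (cases "length xs = Suc (Suc (Suc m))")
    case True
    then obtain x ys where xs: "xs = x # ys" and ys: "length ys = Suc (Suc m)"
      by (cases xs) auto
    have "d (Suc m) (contract x (d (Suc m) f)) ys = d (Suc m) (\<lambda>zs. lie_deriv x f zs - d m (contract x f) zs) ys"
      by (rule d_cong) (simp add: contract_def cartan_formula)
    also have "\<dots> = d (Suc m) (lie_deriv x f) ys"
      by (simp add: d_diff Suc.IH[OF cochain_contract[OF f]])
    finally show ?thesis
      by (simp add: xs cartan_formula[OF ys] lie_deriv_d[OF f ys])
  qed (simp add: leibniz_d_def)
qed

section \<open>Irreducible Leibniz bimodules\<close>

lemma HL_vanishes_0_if_symmetric: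
  assumes "symmetric_bimodule la ra"
    and weight_vector_eq_0: "\<And>u \<mu>. (\<And>x. la x u = sm (\<mu> x) u) \<Longrightarrow> u = 0"
  shows "HL_vanishes sg br sm la ra 0"
  unfolding HL_vanishes_def
proof (intro allI impI)
  fix f assume f: "cochain sg sm 0 f \<and> d 0 f = (\<lambda>_. 0)"
  have "la x (f []) = sm 0 (f [])" for x
    using fun_cong[OF conjunct2[OF f], of "[x]"] assms(1)
    by (simp add: d_0_singleton symmetric_bimodule_def)
  then have "f [] = 0"
    by (rule weight_vector_eq_0)
  then have "f = (\<lambda>_. 0)"
    using cochain_eq_0[OF conjunct1[OF f]] by (metis length_0_conv)
  then show "if 0 = 0 then f = (\<lambda>_. 0) else \<exists>h. cochain sg sm (0 - 1) h \<and> d (0 - 1) h = f"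
    by simp
qed

text \<open>The vectors annihilated by the right action form a sub-bimodule containing every
  \<open>la x v + ra v x\<close>.\<close>

lemma irreducible_right_action_cases:
  assumes irr: "irreducible_bimodule sm la ra"
  shows "(\<forall>v x. ra v x = 0) \<or> (\<forall>v x. ra v x = - la x v)"
proof -
  define K where "K = {v. \<forall>x. ra v x = 0}"
  have "sub_bimodule sm la ra K"
    unfolding sub_bimodule_def
  proof (intro conjI allI impI)
    show "M.subspace K"
      by (rule M.subspaceI) (auto simp: K_def ra_add_left ra_scale_left ra_zero_left)
    fix x v assume "v \<in> K"
    then show "la x v \<in> K" and "ra v x \<in> K"
      by (auto simp: K_def ra_la ra_ra la_zero_right ra_zero_left)
  qed
  then have "K = {0} \<or> K = UNIV"
    using irr by (auto simp: irreducible_bimodule_def)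
  then show ?thesis
  proof
    assume "K = {0}"
    moreover have "la x v + ra v x \<in> K" for x v
      by (simp add: K_def ra_add_left ra_la ra_ra)
    ultimately have "ra v x + la x v = 0" for x v
      by (simp add: add.commute)
    then show ?thesis
      by (simp add: eq_neg_iff_add_eq_0)
  qed (auto simp: K_def)
qed

lemma irreducible_left_invariant_subspace:
  assumes irr: "irreducible_bimodule sm la ra" and W: "M.subspace W"
    and invariant: "\<And>x v. v \<in> W \<Longrightarrow> la x v \<in> W"
  shows "W = {0} \<or> W = UNIV"
proof -
  have "ra v x \<in> W" if "v \<in> W" for v x
    using irreducible_right_action_cases[OF irr] invariant[OF that]
      M.subspace_neg[OF W] M.subspace_0[OF W] by metis
  then have "sub_bimodule sm la ra W"
    using W invariant by (simp add: sub_bimodule_def)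
  then show ?thesis
    using irr by (simp add: irreducible_bimodule_def)
qed

lemma irreducible_weight_vector_eq_0:
  assumes irr: "irreducible_bimodule sm la ra" and dim: "M.dim (UNIV :: 'm set) \<noteq> 1"
    and weight: "\<And>x. la x u = sm (\<mu> x) u"
  shows "u = 0"
proof (rule ccontr)
  assume "u \<noteq> 0"
  have "la x v \<in> M.span {u}" if "v \<in> M.span {u}" for x v
    using that by (auto simp: M.span_singleton la_scale_right weight)
  then have "M.span {u} = {0} \<or> M.span {u} = UNIV"
    by (intro irreducible_left_invariant_subspace[OF irr]) simp_all
  moreover have "M.span {u} \<noteq> {0}"
    using M.span_base[of u "{u}"] \<open>u \<noteq> 0\<close> by auto
  moreover have "M.dim (M.span {u}) = 1"
    using \<open>u \<noteq> 0\<close> by (simp add: M.dim_eq_card_independent)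
  ultimately show False
    using dim by auto
qed

end

section \<open>Adapted flags of supersolvable Lie algebras\<close>

locale adapted_flag = G: vector_space sg
  for sg :: "'k::field \<Rightarrow> 'g::ab_group_add \<Rightarrow> 'g" +
  fixes br :: "'g \<Rightarrow> 'g \<Rightarrow> 'g" and N :: nat and c :: "nat \<Rightarrow> 'g set" and e :: "nat \<Rightarrow> 'g"
  assumes flag_bottom: "c 0 = {0}" and flag_top: "c N = UNIV"
    and flag_ideal: "j \<le> N \<Longrightarrow> lie_ideal sg br (c j)"
    and flag_step: "j < N \<Longrightarrow> c (Suc j) = {sg a (e j) + w | a w. w \<in> c j}"
begin

lemma flag_subspace: "j \<le> N \<Longrightarrow> G.subspace (c j)"
  using flag_ideal by (simp add: lie_ideal_def)

lemma flag_bracket_mem: "j \<le> N \<Longrightarrow> y \<in> c j \<Longrightarrow> br x y \<in> c j"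
  using flag_ideal by (simp add: lie_ideal_def)

lemma flag_mono: "j < N \<Longrightarrow> c j \<subseteq> c (Suc j)"
  using flag_step[of j] by (force intro: exI[of _ 0])

lemma flag_generator_mem: "j < N \<Longrightarrow> e j \<in> c (Suc j)"
  using flag_step[of j] G.subspace_0[OF flag_subspace[of j]] by (force intro: exI[of _ 1])

lemma flag_decompose: "j < N \<Longrightarrow> v \<in> c (Suc j) \<Longrightarrow> \<exists>a. \<exists>w\<in>c j. v = sg a (e j) + w"
  using flag_step[of j] by auto

text \<open>Since \<open>c (Suc j)\<close> is an ideal, \<open>\<g>\<close> acts on the line \<open>c (Suc j) / c j\<close> by the character
  \<open>flag_weight j\<close>.\<close>

definition flag_weight :: "nat \<Rightarrow> 'g \<Rightarrow> 'k" where
  "flag_weight j x = (SOME a. \<exists>w\<in>c j. br x (e j) = sg a (e j) + w)"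

lemma flag_weight: "j < N \<Longrightarrow> \<exists>w\<in>c j. br x (e j) = sg (flag_weight j x) (e j) + w"
  unfolding flag_weight_def
  by (rule someI_ex) (simp add: flag_decompose flag_bracket_mem flag_generator_mem)

end

lemma supersolvable_adapted_flag:
  assumes lie: "lie_algebra sg br" and "fin_dim sg" and "supersolvable sg br"
  obtains N c e where "adapted_flag sg br N c e"
proof -
  have V: "vector_space sg"
    using lie by (simp add: lie_algebra_def)
  then interpret G: vector_space sg .
  obtain B where "finite_dimensional_vector_space sg B"
    using fin_dim_imp_finite_dimensional_vector_space[OF V \<open>fin_dim sg\<close>] .
  then interpret G: finite_dimensional_vector_space sg B .
  obtain N c where bottom: "c 0 = {0}" and top: "c N = UNIV" and ideal: "\<forall>j\<le>N. lie_ideal sg br (c j)"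
    and step: "\<forall>j<N. c j \<subseteq> c (Suc j) \<and> G.dim (c (Suc j)) = G.dim (c j) + 1"
    using \<open>supersolvable sg br\<close> by (auto simp: supersolvable_def)
  have "\<exists>u. u \<in> c (Suc j) \<and> u \<notin> c j" if "j < N" for j
  proof (rule ccontr)
    assume "\<nexists>u. u \<in> c (Suc j) \<and> u \<notin> c j"
    then have "c (Suc j) = c j"
      using step that by blast
    moreover have "G.dim (c (Suc j)) = G.dim (c j) + 1"
      using step that by blast
    ultimately show False
      by simp
  qed
  then obtain e where e: "\<And>j. j < N \<Longrightarrow> e j \<in> c (Suc j) \<and> e j \<notin> c j"
    by metis
  have "c (Suc j) = {sg a (e j) + w | a w. w \<in> c j}" if "j < N" for j
    using ideal step e that
    by (intro G.subspace_eq_line_plus_hyperplane) (auto simp: lie_ideal_def)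
  with bottom top ideal have "adapted_flag sg br N c e"
    by unfold_locales auto
  then show thesis ..
qed

section \<open>Killing cocycles box by box\<close>

locale flag_bimodule = lie_leibniz_bimodule sg br sm la ra + adapted_flag sg br N c e
  for sg :: "'k::field \<Rightarrow> 'g::ab_group_add \<Rightarrow> 'g" and br
    and sm :: "'k \<Rightarrow> 'm::ab_group_add \<Rightarrow> 'm" and la ra N c e +
  assumes left_invariant_subspace:
      "M.subspace W \<Longrightarrow> (\<And>x v. v \<in> W \<Longrightarrow> la x v \<in> W) \<Longrightarrow> W = {0} \<or> W = UNIV"
    and weight_vector_eq_0: "(\<And>x. la x u = sm (\<mu> x) u) \<Longrightarrow> u = 0"
begin

definition flag_indices :: "nat \<Rightarrow> nat list set" where
  "flag_indices n = {T. length T = n \<and> set T \<subseteq> {..<N}}"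

definition in_box :: "nat list \<Rightarrow> 'g list \<Rightarrow> bool" where
  "in_box T xs \<longleftrightarrow> length xs = length T \<and> (\<forall>i<length T. xs ! i \<in> c (Suc (T ! i)))"

definition vanishes_on :: "nat list set \<Rightarrow> ('g list \<Rightarrow> 'm) \<Rightarrow> bool" where
  "vanishes_on P f \<longleftrightarrow> (\<forall>T\<in>P. \<forall>xs. in_box T xs \<longrightarrow> f xs = 0)"

definition vanishes_below :: "nat list \<Rightarrow> ('g list \<Rightarrow> 'm) \<Rightarrow> bool" where
  "vanishes_below T f \<longleftrightarrow> (\<forall>xs i. in_box T xs \<longrightarrow> i < length T \<longrightarrow> xs ! i \<in> c (T ! i) \<longrightarrow> f xs = 0)"

definition weight :: "nat list \<Rightarrow> 'g \<Rightarrow> 'k" where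
  "weight T x = (\<Sum>j\<leftarrow>T. flag_weight j x)"

lemma finite_flag_indices: "finite (flag_indices n)"
  using finite_lists_length_eq[of "{..<N}" n] by (simp add: flag_indices_def conj_commute)

lemma down_closed_flag_indices: "down_closed (flag_indices n)"
  unfolding down_closed_def flag_indices_def
  by (auto simp: list_all2_conv_all_nth in_set_conv_nth) (metis le_less_trans lessThan_iff nth_mem subsetD)

lemma vanishes_belowD:
  "vanishes_below T f \<Longrightarrow> in_box T xs \<Longrightarrow> i < length T \<Longrightarrow> xs ! i \<in> c (T ! i) \<Longrightarrow> f xs = 0"
  by (simp add: vanishes_below_def)

lemma in_box_map_generator: "set T \<subseteq> {..<N} \<Longrightarrow> in_box T (map e T)"
  unfolding in_box_def using nth_mem by (fastforce intro: flag_generator_mem)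

lemma in_box_update: "in_box T xs \<Longrightarrow> i < length T \<Longrightarrow> v \<in> c (Suc (T ! i)) \<Longrightarrow> in_box T (xs[i := v])"
  by (simp add: in_box_def nth_list_update)

lemma in_box_length: "in_box T xs \<Longrightarrow> T \<in> flag_indices n \<Longrightarrow> length xs = n"
  by (simp add: in_box_def flag_indices_def)

lemma vanishes_on_lie_deriv:
  assumes "P \<subseteq> flag_indices n" and "vanishes_on P f"
  shows "vanishes_on P (lie_deriv x f)"
  unfolding vanishes_on_def
proof (intro ballI allI impI)
  fix T xs assume "T \<in> P" and box: "in_box T xs"
  then have "set T \<subseteq> {..<N}"
    using assms(1) by (auto simp: flag_indices_def)
  then have "Suc (T ! l) \<le> N" if "l < length T" for l
    using that nth_mem by fastforce
  then have "in_box T (xs[l := br x (xs ! l)])" if "l < length xs" for l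
    using box that by (intro in_box_update) (auto simp: in_box_def intro: flag_bracket_mem)
  then show "lie_deriv x f xs = 0"
    using assms(2) \<open>T \<in> P\<close> box by (simp add: vanishes_on_def lie_deriv_def la_zero_right)
qed

lemma vanishes_below_if_vanishes_on_Diff:
  assumes "down_closed P" and "T \<in> P" and f: "cochain sg sm n f" and "vanishes_on (P - {T}) f"
  shows "vanishes_below T f"
  unfolding vanishes_below_def
proof (intro allI impI)
  fix xs i assume box: "in_box T xs" and i: "i < length T" and xi: "xs ! i \<in> c (T ! i)"
  show "f xs = 0"
  proof (cases "T ! i")
    case 0
    then have "xs ! i = 0"
      using xi flag_bottom by simp
    then have "xs = xs[i := 0]"
      by (metis list_update_id)
    also have "f \<dots> = 0"
      using box i by (simp add: in_box_def cochain_update_0[OF f])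
    finally show ?thesis .
  next
    case (Suc j)
    define S where "S = T[i := j]"
    have "list_all2 (\<le>) S T"
      using Suc i by (auto simp: S_def list_all2_conv_all_nth nth_list_update)
    moreover have "S \<noteq> T"
      using Suc i by (metis S_def nth_list_update_eq n_not_Suc_n)
    ultimately have "S \<in> P - {T}"
      using assms(1,2) by (auto simp: down_closed_def)
    moreover have "in_box S xs"
      using box xi i Suc by (simp add: in_box_def S_def nth_list_update)
    ultimately show ?thesis
      using assms(4) by (auto simp: vanishes_on_def)
  qed
qed

lemma lie_deriv_at_generators:
  assumes T: "set T \<subseteq> {..<N}" and f: "cochain sg sm n f" and below: "vanishes_below T f"
  shows "lie_deriv x f (map e T) = la x (f (map e T)) - sm (weight T x) (f (map e T))"
proof -
  have "f ((map e T)[l := br x (e (T ! l))]) = sm (flag_weight (T ! l) x) (f (map e T))"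
    if l: "l < length T" for l
  proof -
    have "T ! l < N"
      using T l by (auto dest: nth_mem)
    then obtain w where w: "w \<in> c (T ! l)"
      and bw: "br x (e (T ! l)) = sg (flag_weight (T ! l) x) (e (T ! l)) + w"
      using flag_weight by blast
    have "in_box T ((map e T)[l := w])"
      using in_box_map_generator[OF T] l w flag_mono[OF \<open>T ! l < N\<close>] by (auto intro: in_box_update)
    then have "f ((map e T)[l := w]) = 0"
      using l w by (intro vanishes_belowD[OF below, of _ l]) simp_all
    moreover have "(map e T)[l := e (T ! l)] = map e T"
      using l by (metis list_update_id nth_map)
    ultimately show ?thesis
      using l by (simp add: bw cochain_update_add[OF f] cochain_update_scale[OF f])
  qed
  then show ?thesis
    by (simp add: lie_deriv_def weight_def sum_list_sum_nth atLeast0LessThan M.scale_sum_left)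
qed

lemma vanishes_in_box_if_at_generators:
  assumes T: "set T \<subseteq> {..<N}" and f: "cochain sg sm n f" and below: "vanishes_below T f"
    and at_generators: "f (map e T) = 0" and "in_box T xs"
  shows "f xs = 0"
proof -
  have "f xs = 0" if "in_box T xs" and "\<forall>i. j \<le> i \<longrightarrow> i < length T \<longrightarrow> xs ! i = e (T ! i)" for j xs
    using that
  proof (induction j arbitrary: xs)
    case 0
    then have "xs = map e T"
      by (intro nth_equalityI) (auto simp: in_box_def)
    with at_generators show ?case
      by simp
  next
    case (Suc j)
    show ?case
    proof (cases "j < length T")
      case False
      then show ?thesis
        using Suc by auto
    next
      case True
      then have "T ! j < N" and len: "j < length xs"
        using T Suc.prems(1) nth_mem by (fastforce simp: in_box_def)+
      then obtain a w where w: "w \<in> c (T ! j)" and xj: "xs ! j = sg a (e (T ! j)) + w"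
        using flag_decompose Suc.prems(1) True by (meson in_box_def)
      have "f xs = f (xs[j := sg a (e (T ! j)) + w])"
        using xj by (metis list_update_id)
      also have "\<dots> = sm a (f (xs[j := e (T ! j)])) + f (xs[j := w])"
        using len by (simp add: cochain_update_add[OF f] cochain_update_scale[OF f])
      also have "f (xs[j := e (T ! j)]) = 0"
        using Suc.prems True len flag_generator_mem[OF \<open>T ! j < N\<close>]
        by (intro Suc.IH) (auto simp: in_box_update nth_list_update)
      also have "f (xs[j := w]) = 0"
        using Suc.prems(1) True len w flag_mono[OF \<open>T ! j < N\<close>]
        by (intro vanishes_belowD[OF below, of _ j]) (auto intro: in_box_update)
      finally show ?thesis
        by simp
    qed
  qed
  from this[OF \<open>in_box T xs\<close>, of "length T"] show ?thesis
    by simp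
qed

lemma vanishes_on_d_lie_deriv:
  assumes Q: "Q \<subseteq> flag_indices (Suc p)" and h: "cochain sg sm p h" and "vanishes_on Q (d p h)"
  shows "vanishes_on Q (d p (lie_deriv x h))"
  unfolding vanishes_on_def
proof (intro ballI allI impI)
  fix S xs assume "S \<in> Q" and "in_box S xs"
  then have "d p (lie_deriv x h) xs = lie_deriv x (d p h) xs"
    using Q by (simp add: lie_deriv_d[OF h] in_box_length subset_iff)
  also have "\<dots> = 0"
    using vanishes_on_lie_deriv[OF Q assms(3)] \<open>S \<in> Q\<close> \<open>in_box S xs\<close> by (simp add: vanishes_on_def)
  finally show "d p (lie_deriv x h) xs = 0" .
qed

lemma vanishes_on_d_contract:
  assumes Q: "Q \<subseteq> flag_indices (Suc p)" and cocycle: "\<And>xs. d (Suc p) g xs = 0" and "vanishes_on Q g"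
  shows "vanishes_on Q (d p (contract x g))"
  unfolding vanishes_on_def
proof (intro ballI allI impI)
  fix S xs assume "S \<in> Q" and "in_box S xs"
  then have "d p (contract x g) xs = lie_deriv x g xs"
    using Q by (simp add: d_contract_cocycle[OF cocycle] in_box_length subset_iff)
  also have "\<dots> = 0"
    using vanishes_on_lie_deriv[OF Q assms(3)] \<open>S \<in> Q\<close> \<open>in_box S xs\<close> by (simp add: vanishes_on_def)
  finally show "d p (contract x g) xs = 0" .
qed

definition corrections :: "nat \<Rightarrow> nat list set \<Rightarrow> nat list \<Rightarrow> 'm set" where
  "corrections p Q T = {d p h (map e T) | h. cochain sg sm p h \<and> vanishes_on Q (d p h)}"

lemma subspace_corrections: "M.subspace (corrections p Q T)"
proof (rule M.subspaceI)
  show "0 \<in> corrections p Q T"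
    unfolding corrections_def
    by (intro CollectI exI[of _ "\<lambda>_. 0"]) (simp add: cochain_zero d_zero vanishes_on_def)
next
  fix v w assume "v \<in> corrections p Q T" and "w \<in> corrections p Q T"
  then obtain h1 h2 where "v = d p h1 (map e T)" "cochain sg sm p h1" "vanishes_on Q (d p h1)"
    and "w = d p h2 (map e T)" "cochain sg sm p h2" "vanishes_on Q (d p h2)"
    unfolding corrections_def by blast
  then show "v + w \<in> corrections p Q T"
    unfolding corrections_def
    by (intro CollectI exI[of _ "\<lambda>xs. h1 xs + h2 xs"]) (simp add: cochain_add d_add vanishes_on_def)
next
  fix a v assume "v \<in> corrections p Q T"
  then obtain h where "v = d p h (map e T)" "cochain sg sm p h" "vanishes_on Q (d p h)"
    unfolding corrections_def by blast
  then show "sm a v \<in> corrections p Q T"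
    unfolding corrections_def
    by (intro CollectI exI[of _ "\<lambda>xs. sm a (h xs)"]) (simp add: cochain_scale d_scale vanishes_on_def)
qed

context
  fixes p :: nat and P :: "nat list set" and T :: "nat list"
  assumes P_down_closed: "down_closed P" and P_flag_indices: "P \<subseteq> flag_indices (Suc p)" and "T \<in> P"
begin

lemma corrections_left_invariant:
  assumes "v \<in> corrections p (P - {T}) T"
  shows "la x v \<in> corrections p (P - {T}) T"
proof -
  obtain h where v: "v = d p h (map e T)" and h: "cochain sg sm p h" and van: "vanishes_on (P - {T}) (d p h)"
    using assms by (auto simp: corrections_def)
  have T: "set T \<subseteq> {..<N}" "length T = Suc p"
    using P_flag_indices \<open>T \<in> P\<close> by (auto simp: flag_indices_def)
  have "la x v - sm (weight T x) v = lie_deriv x (d p h) (map e T)"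
    using lie_deriv_at_generators[OF T(1) cochain_d[OF h]
        vanishes_below_if_vanishes_on_Diff[OF P_down_closed \<open>T \<in> P\<close> cochain_d[OF h] van]] v
    by simp
  also have "\<dots> = d p (lie_deriv x h) (map e T)"
    using lie_deriv_d[OF h] T(2) by simp
  also have "\<dots> \<in> corrections p (P - {T}) T"
    using cochain_lie_deriv[OF h] vanishes_on_d_lie_deriv[OF _ h van] P_flag_indices
    by (auto simp: corrections_def)
  finally have "la x v - sm (weight T x) v \<in> corrections p (P - {T}) T" .
  moreover have "sm (weight T x) v \<in> corrections p (P - {T}) T"
    using assms by (rule M.subspace_scale[OF subspace_corrections])
  ultimately show ?thesis
    using M.subspace_add[OF subspace_corrections] by fastforce
qed

lemma cocycle_at_generators_in_corrections:
  assumes g: "cochain sg sm (Suc p) g" and cocycle: "\<And>xs. d (Suc p) g xs = 0"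
    and van: "vanishes_on (P - {T}) g"
  shows "g (map e T) \<in> corrections p (P - {T}) T"
proof -
  have T: "set T \<subseteq> {..<N}" "length T = Suc p"
    using P_flag_indices \<open>T \<in> P\<close> by (auto simp: flag_indices_def)
  have weight_defect: "la x (g (map e T)) - sm (weight T x) (g (map e T)) \<in> corrections p (P - {T}) T"
    for x
  proof -
    have "la x (g (map e T)) - sm (weight T x) (g (map e T)) = lie_deriv x g (map e T)"
      using lie_deriv_at_generators[OF T(1) g vanishes_below_if_vanishes_on_Diff[OF P_down_closed \<open>T \<in> P\<close> g van]]
      by simp
    also have "\<dots> = d p (contract x g) (map e T)"
      using d_contract_cocycle[OF cocycle] T(2) by simp
    also have "\<dots> \<in> corrections p (P - {T}) T"
      using cochain_contract[OF g] vanishes_on_d_contract[OF _ cocycle van] P_flag_indices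
      by (auto simp: corrections_def)
    finally show ?thesis .
  qed
  from left_invariant_subspace[OF subspace_corrections corrections_left_invariant]
  show ?thesis
  proof
    assume "corrections p (P - {T}) T = {0}"
    then have "g (map e T) = 0"
      using weight_defect by (intro weight_vector_eq_0[of _ "weight T"]) simp
    then show ?thesis
      using M.subspace_0[OF subspace_corrections] by simp
  next
    assume "corrections p (P - {T}) T = UNIV"
    then show ?thesis
      by simp
  qed
qed

lemma cocycle_correction_on_box:
  assumes g: "cochain sg sm (Suc p) g" and cocycle: "\<And>xs. d (Suc p) g xs = 0"
    and van: "vanishes_on (P - {T}) g"
  shows "\<exists>h. cochain sg sm p h \<and> vanishes_on P (\<lambda>xs. g xs - d p h xs)"
proof -
  obtain h where h: "cochain sg sm p h" and vh: "vanishes_on (P - {T}) (d p h)"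
    and at_generators: "g (map e T) - d p h (map e T) = 0"
    using cocycle_at_generators_in_corrections[OF assms] by (auto simp: corrections_def)
  have g': "cochain sg sm (Suc p) (\<lambda>xs. g xs - d p h xs)"
    by (rule cochain_diff[OF g cochain_d[OF h]])
  have van': "vanishes_on (P - {T}) (\<lambda>xs. g xs - d p h xs)"
    using van vh by (simp add: vanishes_on_def)
  have "set T \<subseteq> {..<N}"
    using P_flag_indices \<open>T \<in> P\<close> by (auto simp: flag_indices_def)
  then have "g xs - d p h xs = 0" if "in_box T xs" for xs
    using vanishes_in_box_if_at_generators[OF _ g'
        vanishes_below_if_vanishes_on_Diff[OF P_down_closed \<open>T \<in> P\<close> g' van'] at_generators that]
    by blast
  with van' have "vanishes_on P (\<lambda>xs. g xs - d p h xs)"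
    by (auto simp: vanishes_on_def)
  with h show ?thesis
    by blast
qed

end

lemma cocycle_coboundary_on_down_closed:
  assumes f: "cochain sg sm (Suc p) f" and cocycle: "\<And>xs. d (Suc p) f xs = 0"
  shows "down_closed P \<Longrightarrow> P \<subseteq> flag_indices (Suc p) \<Longrightarrow>
    \<exists>h. cochain sg sm p h \<and> vanishes_on P (\<lambda>xs. f xs - d p h xs)"
proof (induction "card P" arbitrary: P)
  case 0
  then have "P = {}"
    using finite_subset[OF _ finite_flag_indices] by auto
  then show ?case
    using cochain_zero by (auto simp: vanishes_on_def)
next
  case (Suc k)
  have "finite P"
    using Suc.prems(2) finite_flag_indices finite_subset by blast
  moreover have "P \<noteq> {}"
    using Suc.hyps(2) by auto
  ultimately obtain T where "T \<in> P" and "down_closed (P - {T})"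
    using finite_down_closed_remove Suc.prems(1) by blast
  moreover have "card (P - {T}) = k"
    using Suc.hyps(2) \<open>T \<in> P\<close> \<open>finite P\<close> by simp
  ultimately obtain h where h: "cochain sg sm p h"
    and van: "vanishes_on (P - {T}) (\<lambda>xs. f xs - d p h xs)"
    using Suc.hyps(1) Suc.prems(2) by blast
  have "cochain sg sm (Suc p) (\<lambda>xs. f xs - d p h xs)"
    by (rule cochain_diff[OF f cochain_d[OF h]])
  moreover have "d (Suc p) (\<lambda>xs. f xs - d p h xs) xs = 0" for xs
    by (simp add: d_diff cocycle d_d[OF h])
  ultimately obtain h' where h': "cochain sg sm p h'"
    and "vanishes_on P (\<lambda>xs. f xs - d p h xs - d p h' xs)"
    using cocycle_correction_on_box[OF Suc.prems(1,2) \<open>T \<in> P\<close> _ _ van] by blast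
  then have "vanishes_on P (\<lambda>xs. f xs - d p (\<lambda>zs. h zs + h' zs) xs)"
    by (simp add: d_add algebra_simps)
  with cochain_add[OF h h'] show ?case
    by blast
qed

lemma eq_0_if_vanishes_on_flag_indices:
  assumes f: "cochain sg sm n f" and van: "vanishes_on (flag_indices n) f"
  shows "f xs = 0"
proof (cases "length xs = n")
  case True
  show ?thesis
  proof (cases "N = 0 \<and> 0 < n")
    case True
    then have "xs ! 0 = 0"
      using flag_bottom flag_top by auto
    then have "xs = xs[0 := 0]"
      by (metis list_update_id)
    also have "f \<dots> = 0"
      using True \<open>length xs = n\<close> by (simp add: cochain_update_0[OF f])
    finally show ?thesis .
  next
    case False
    then have "replicate n (N - 1) \<in> flag_indices n" and "in_box (replicate n (N - 1)) xs"
      using \<open>length xs = n\<close> flag_top by (auto simp: flag_indices_def in_box_def)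
    then show ?thesis
      using van by (simp add: vanishes_on_def)
  qed
qed (simp add: cochain_eq_0[OF f])

lemma cocycle_is_coboundary:
  assumes f: "cochain sg sm (Suc p) f" and cocycle: "\<And>xs. d (Suc p) f xs = 0"
  shows "\<exists>h. cochain sg sm p h \<and> d p h = f"
proof -
  obtain h where h: "cochain sg sm p h" and "vanishes_on (flag_indices (Suc p)) (\<lambda>xs. f xs - d p h xs)"
    using cocycle_coboundary_on_down_closed[OF f cocycle down_closed_flag_indices order_refl] by blast
  then have "f xs - d p h xs = 0" for xs
    using eq_0_if_vanishes_on_flag_indices cochain_diff[OF f cochain_d[OF h]] by blast
  with h show ?thesis
    by (auto simp: fun_eq_iff)
qed

lemma HL_vanishes_Suc: "HL_vanishes sg br sm la ra (Suc p)"
  unfolding HL_vanishes_def using cocycle_is_coboundary by (simp add: fun_eq_iff)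

end

theorem proposition2p7:
  fixes sg :: "'k::field \<Rightarrow> 'g::ab_group_add \<Rightarrow> 'g"
    and br :: "'g \<Rightarrow> 'g \<Rightarrow> 'g"
    and sm :: "'k \<Rightarrow> 'm::ab_group_add \<Rightarrow> 'm"
    and la :: "'g \<Rightarrow> 'm \<Rightarrow> 'm"
    and ra :: "'m \<Rightarrow> 'g \<Rightarrow> 'm"
  assumes "lie_algebra sg br"
    and "fin_dim sg"
    and "supersolvable sg br"
    and "leibniz_bimodule sg br sm la ra"
    and "fin_dim sm"
    and "irreducible_bimodule sm la ra"
    and "vector_space.dim sm (UNIV :: 'm set) \<noteq> 1"
  shows "(\<forall>n::nat. n \<ge> 1 \<longrightarrow> HL_vanishes sg br sm la ra n) \<and>
         (symmetric_bimodule la ra \<longrightarrow> (\<forall>n::nat. HL_vanishes sg br sm la ra n))"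
proof -
  have lie_bimodule: "lie_leibniz_bimodule sg br sm la ra"
    using assms(1,4) by (rule lie_leibniz_bimodule.intro)
  then interpret lie_leibniz_bimodule sg br sm la ra .
  have no_weight_vector: "u = 0" if "\<And>x. la x u = sm (\<mu> x) u" for u \<mu>
    using irreducible_weight_vector_eq_0[OF assms(6,7) that] .
  obtain N c e where flag: "adapted_flag sg br N c e"
    using supersolvable_adapted_flag[OF assms(1-3)] .
  interpret flag_bimodule sg br sm la ra N c e
    using irreducible_left_invariant_subspace[OF assms(6)] no_weight_vector
    by (intro flag_bimodule.intro flag_bimodule_axioms.intro lie_bimodule flag) blast+
  have positive: "HL_vanishes sg br sm la ra n" if "n \<ge> 1" for n
    using HL_vanishes_Suc[of "n - 1"] that by simp
  moreover have "HL_vanishes sg br sm la ra 0" if "symmetric_bimodule la ra"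
    using that no_weight_vector by (rule HL_vanishes_0_if_symmetric)
  ultimately show ?thesis
    by (metis less_one not_le)
qed

end
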